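(* Let $\mathbb{M}$ be a weight sequence with sequence of quotients $\mathbf{m}$. The following are equivalent: (i) $0<\liminf_{t\to\infty}\frac{\nu_{\mathbf{m}}(t)}{\omega_{\mathbb{M}}(t)}\le\limsup_{t\to\infty}\frac{\nu_{\mathbf{m}}(t)}{\omega_{\mathbb{M}}(t)}<\infty$; (ii) $\beta(\nu_{\mathbf{m}})>0$ and $\alpha(\nu_{\mathbf{m}})<\infty$; (iii) $\beta(\omega_{\mathbb{M}})>0$ and $\alpha(\omega_{\mathbb{M}})<\infty$. In this case, $\beta(\omega_{\mathbb{M}})=\beta(\nu_{\mathbf{m}})$ and $\alpha(\omega_{\mathbb{M}})=\alpha(\nu_{\mathbf{m}})$.
   Context: A weight sequence is $\mathbb{M}=(M_p)_{p\in\mathbb{N}_0}$ of positive reals with $M_0=1$, $M_p^2\le M_{p-1}M_{p+1}$ ($p\ge1$) and $M_p^{1/p}\to\infty$; $m_p=M_{p+1}/M_p$. $\omega_{\mathbb{M}}(t):=\sup_{p\in\mathbb{N}_0}\log(t^p/M_p)$ for $t>0$, $\omega_{\mathbb{M}}(0)=0$; $\nu_{\mathbf{m}}(t):=\#\{j\in\mathbb{N}_0:m_j\le t\}$ for $t>0$. For a positive measurable $f$ on $[A,\infty)$: $\alpha(f):=\inf\{\alpha:\exists C_\alpha>0\ \forall\Lambda>1,\ \limsup_{x\to\infty}\sup_{\lambda\in[1,\Lambda]}\frac{f(\lambda x)}{\lambda^{\alpha}f(x)}\le C_\alpha\}$ and $\beta(f):=\sup\{\beta:\exists D_\beta>0\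 \forall\Lambda>1,\ \liminf_{x\to\infty}\inf_{\lambda\in[1,\Lambda]}\frac{f(\lambda x)}{\lambda^{\beta}f(x)}\ge D_\beta\}$; for $\omega_{\mathbb{M}}$, $\nu_{\mathbf{m}}$ they are computed on any $[A,\infty)$, $A>0$, where the function is positive. *)

theory Defs
  imports "HOL-Analysis.Analysis"
begin

definition weight_sequence :: "(nat \<Rightarrow> real) \<Rightarrow> bool" where
  "weight_sequence M \<longleftrightarrow>
     M 0 = 1 \<and> (\<forall>p. M p > 0) \<and>
     (\<forall>p\<ge>1. (M p)^2 \<le> M (p - 1) * M (p + 1)) \<and>
     filterlim (\<lambda>p. M p powr (1 / real p)) at_top sequentially"

definition quotients :: "(nat \<Rightarrow> real) \<Rightarrow> nat \<Rightarrow> real" where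
  "quotients M p = M (Suc p) / M p"

definition omegaM :: "(nat \<Rightarrow> real) \<Rightarrow> real \<Rightarrow> real" where
  "omegaM M t = (if t > 0 then (SUP p. ln (t ^ p / M p)) else 0)"

definition nu_m :: "(nat \<Rightarrow> real) \<Rightarrow> real \<Rightarrow> real" where
  "nu_m m t = (if t > 0 then real (card {j. m j \<le> t}) else 0)"

text \<open>Only the behaviour as x tends to infinity
  matters, so the choice of the interval [A,infinity) is immaterial; they take values in
  the extended reals (Inf of the empty set is infinity, Sup of the empty set is -infinity).\<close>
definition alpha_idx :: "(real \<Rightarrow> real) \<Rightarrow> ereal" where
  "alpha_idx f = Inf {ereal a | a. \<exists>C>0. \<forall>\<Lambda>>1.
      Limsup at_top (\<lambda>x. SUP l\<in>{1..\<Lambda>}. ereal (f (l * x) / (l powr a * f x))) \<le> ereal C}"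

definition beta_idx :: "(real \<Rightarrow> real) \<Rightarrow> ereal" where
  "beta_idx f = Sup {ereal b | b. \<exists>D>0. \<forall>\<Lambda>>1.
      Liminf at_top (\<lambda>x. INF l\<in>{1..\<Lambda>}. ereal (f (l * x) / (l powr b * f x))) \<ge> ereal D}"

end

theory Submission
  imports Defs
begin

text \<open>
  For t > 0 the supremum defining omega t is attained at
  p = nu t, because ln (t^p / M p) increases in p exactly as long as m p \<le> t. Bounding omega y
  below by the term attained at x, and omega x below by the term attained at y, gives for
  0 < x \<le> y
    omega x + nu x * ln (y / x) \<le> omega y \<le> omega x + nu y * ln (y / x),
  a discrete form of omega t = integral of nu s / s over (0, t]; nothing else is used.

  Condition (i) says that nu and omega are comparable. If they are, these inequalities turn into
  omega (q x) \<le> 2 omega x and omega (p x) \<ge> 2 omega x for suitable q, p > 1, and iterating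
  them yields a finite alpha and a positive beta for omega. Conversely, such indices give
  omega (e x) \<le> K omega x and omega (q x) \<ge> 2 omega x, which squeeze nu between multiples
  of omega. For nu, beta > 0 gives nu (q x) \<ge> 2 nu x, and iterating the right-hand inequality
  along x, x/q, x/q^2, ... bounds omega by a multiple of nu. Both indices are invariant under
  comparability, which also gives their equality.
\<close>

definition alpha_admissible :: "(real \<Rightarrow> real) \<Rightarrow> real \<Rightarrow> bool" where
  "alpha_admissible f a \<longleftrightarrow>
     (\<exists>C>0. \<forall>\<Lambda>>1. \<forall>\<^sub>F x in at_top. \<forall>l\<in>{1..\<Lambda>}. f (l * x) / (l powr a * f x) \<le> C)"

definition beta_admissible :: "(real \<Rightarrow> real) \<Rightarrow> real \<Rightarrow> bool" where
  "beta_admissible f b \<longleftrightarrow>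
     (\<exists>D>0. \<forall>\<Lambda>>1. \<forall>\<^sub>F x in at_top. \<forall>l\<in>{1..\<Lambda>}. D \<le> f (l * x) / (l powr b * f x))"

lemma Limsup_SUP_bounded_iff_eventually:
  fixes r :: "'i \<Rightarrow> 'a \<Rightarrow> real"
  shows "(\<exists>C>0. \<forall>k. P k \<longrightarrow> Limsup F (\<lambda>x. SUP l\<in>S k. ereal (r l x)) \<le> ereal C) \<longleftrightarrow>
         (\<exists>C>0. \<forall>k. P k \<longrightarrow> (\<forall>\<^sub>F x in F. \<forall>l\<in>S k. r l x \<le> C))"
proof
  assume "\<exists>C>0. \<forall>k. P k \<longrightarrow> Limsup F (\<lambda>x. SUP l\<in>S k. ereal (r l x)) \<le> ereal C"
  then obtain C where "C > 0" and C: "\<And>k. P k \<Longrightarrow> Limsup F (\<lambda>x. SUP l\<in>S k. ereal (r l x)) \<le> ereal C"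
    by blast
  have "\<forall>\<^sub>F x in F. \<forall>l\<in>S k. r l x \<le> C + 1" if "P k" for k
  proof -
    have "Limsup F (\<lambda>x. SUP l\<in>S k. ereal (r l x)) < ereal (C + 1)"
      using C[OF that] by (rule order.strict_trans1) simp
    from Limsup_lessD[OF this] show ?thesis
      by (rule eventually_mono) (auto dest: SUP_lessD)
  qed
  then show "\<exists>C>0. \<forall>k. P k \<longrightarrow> (\<forall>\<^sub>F x in F. \<forall>l\<in>S k. r l x \<le> C)"
    using \<open>C > 0\<close> by (intro exI[of _ "C + 1"]) auto
next
  assume "\<exists>C>0. \<forall>k. P k \<longrightarrow> (\<forall>\<^sub>F x in F. \<forall>l\<in>S k. r l x \<le> C)"
  then obtain C where "C > 0" and C: "\<And>k. P k \<Longrightarrow> \<forall>\<^sub>F x in F. \<forall>l\<in>S k. r l x \<le> C"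
    by blast
  have "Limsup F (\<lambda>x. SUP l\<in>S k. ereal (r l x)) \<le> ereal C" if "P k" for k
    using C[OF that] by (intro Limsup_bounded) (auto elim!: eventually_mono intro!: SUP_least)
  then show "\<exists>C>0. \<forall>k. P k \<longrightarrow> Limsup F (\<lambda>x. SUP l\<in>S k. ereal (r l x)) \<le> ereal C"
    using \<open>C > 0\<close> by blast
qed

lemma Liminf_INF_bounded_iff_eventually:
  fixes r :: "'i \<Rightarrow> 'a \<Rightarrow> real"
  shows "(\<exists>D>0. \<forall>k. P k \<longrightarrow> ereal D \<le> Liminf F (\<lambda>x. INF l\<in>S k. ereal (r l x))) \<longleftrightarrow>
         (\<exists>D>0. \<forall>k. P k \<longrightarrow> (\<forall>\<^sub>F x in F. \<forall>l\<in>S k. D \<le> r l x))"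
proof
  assume "\<exists>D>0. \<forall>k. P k \<longrightarrow> ereal D \<le> Liminf F (\<lambda>x. INF l\<in>S k. ereal (r l x))"
  then obtain D where "D > 0" and D: "\<And>k. P k \<Longrightarrow> ereal D \<le> Liminf F (\<lambda>x. INF l\<in>S k. ereal (r l x))"
    by blast
  have "\<forall>\<^sub>F x in F. \<forall>l\<in>S k. D / 2 \<le> r l x" if "P k" for k
  proof -
    have "ereal (D / 2) < Liminf F (\<lambda>x. INF l\<in>S k. ereal (r l x))"
      using D[OF that] by (rule order.strict_trans2[rotated]) (simp add: \<open>D > 0\<close>)
    from less_LiminfD[OF this] show ?thesis
      by (rule eventually_mono) (auto dest: less_INF_D)
  qed
  then show "\<exists>D>0. \<forall>k. P k \<longrightarrow> (\<forall>\<^sub>F x in F. \<forall>l\<in>S k. D \<le> r l x)"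
    using \<open>D > 0\<close> by (intro exI[of _ "D / 2"]) auto
next
  assume "\<exists>D>0. \<forall>k. P k \<longrightarrow> (\<forall>\<^sub>F x in F. \<forall>l\<in>S k. D \<le> r l x)"
  then obtain D where "D > 0" and D: "\<And>k. P k \<Longrightarrow> \<forall>\<^sub>F x in F. \<forall>l\<in>S k. D \<le> r l x"
    by blast
  have "ereal D \<le> Liminf F (\<lambda>x. INF l\<in>S k. ereal (r l x))" if "P k" for k
    using D[OF that] by (intro Liminf_bounded) (auto elim!: eventually_mono intro!: INF_greatest)
  then show "\<exists>D>0. \<forall>k. P k \<longrightarrow> ereal D \<le> Liminf F (\<lambda>x. INF l\<in>S k. ereal (r l x))"
    using \<open>D > 0\<close> by blast
qed

lemma alpha_idx_eq_Inf_admissible: "alpha_idx f = Inf {ereal a |a. alpha_admissible f a}"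
  unfolding alpha_idx_def alpha_admissible_def
  by (simp only: Limsup_SUP_bounded_iff_eventually[where P = "\<lambda>\<Lambda>. 1 < \<Lambda>"])

lemma beta_idx_eq_Sup_admissible: "beta_idx f = Sup {ereal b |b. beta_admissible f b}"
  unfolding beta_idx_def beta_admissible_def
  by (simp only: Liminf_INF_bounded_iff_eventually[where P = "\<lambda>\<Lambda>. 1 < \<Lambda>"])

lemma alpha_idx_less_infinity_iff: "alpha_idx f < \<infinity> \<longleftrightarrow> (\<exists>a. alpha_admissible f a)"
  unfolding alpha_idx_eq_Inf_admissible Inf_less_iff by auto

lemma beta_idx_pos_iff: "0 < beta_idx f \<longleftrightarrow> (\<exists>b>0. beta_admissible f b)"
  unfolding beta_idx_eq_Sup_admissible less_Sup_iff by auto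

definition comparable_at_top :: "(real \<Rightarrow> real) \<Rightarrow> (real \<Rightarrow> real) \<Rightarrow> bool" where
  "comparable_at_top f g \<longleftrightarrow>
     (\<exists>c>0. \<exists>C>0. \<forall>\<^sub>F x in at_top. c * g x \<le> f x \<and> f x \<le> C * g x)"

lemma comparable_at_topI:
  assumes "c > 0" "C > 0" "\<forall>\<^sub>F x in at_top. c * g x \<le> f x" "\<forall>\<^sub>F x in at_top. f x \<le> C * g x"
  shows "comparable_at_top f g"
  unfolding comparable_at_top_def using assms eventually_conj by blast

lemma comparable_at_top_sym:
  assumes "comparable_at_top f g"
  shows "comparable_at_top g f"
proof -
  obtain c C where "c > 0" "C > 0" and cC: "\<forall>\<^sub>F x in at_top. c * g x \<le> f x \<and> f x \<le> C * g x"
    using assms unfolding comparable_at_top_def by blast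
  from cC have "\<forall>\<^sub>F x in at_top. 1 / C * f x \<le> g x \<and> g x \<le> 1 / c * f x"
    by eventually_elim (use \<open>c > 0\<close> \<open>C > 0\<close> in \<open>auto simp: field_simps\<close>)
  moreover have "1 / C > 0" "1 / c > 0"
    using \<open>c > 0\<close> \<open>C > 0\<close> by auto
  ultimately show ?thesis
    unfolding comparable_at_top_def by blast
qed

lemma comparable_at_top_eventually_pos:
  assumes "comparable_at_top f g" "\<forall>\<^sub>F x in at_top. 0 < g x"
  shows "\<forall>\<^sub>F x in at_top. 0 < f x"
proof -
  obtain c C where "c > 0" and cC: "\<forall>\<^sub>F x in at_top. c * g x \<le> f x \<and> f x \<le> C * g x"
    using assms(1) unfolding comparable_at_top_def by blast
  from cC assms(2) show ?thesis
    by eventually_elim (use \<open>c > 0\<close> in \<open>auto intro: less_le_trans[OF mult_pos_pos]\<close>)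
qed

lemma comparable_at_top_iff_Liminf_Limsup_ratio:
  assumes "\<forall>\<^sub>F x in at_top. 0 < g x"
  shows "comparable_at_top f g \<longleftrightarrow>
    0 < Liminf at_top (\<lambda>x. ereal (f x / g x)) \<and> Limsup at_top (\<lambda>x. ereal (f x / g x)) < \<infinity>"
    (is "_ \<longleftrightarrow> 0 < ?lo \<and> ?up < \<infinity>")
proof
  assume "comparable_at_top f g"
  then obtain c C where "c > 0" "C > 0"
    and cC: "\<forall>\<^sub>F x in at_top. c * g x \<le> f x \<and> f x \<le> C * g x"
    unfolding comparable_at_top_def by blast
  from cC assms have "\<forall>\<^sub>F x in at_top. c \<le> f x / g x \<and> f x / g x \<le> C"
    by eventually_elim (simp add: field_simps)
  then have "ereal c \<le> ?lo" "?up \<le> ereal C"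
    by (auto intro!: Liminf_bounded Limsup_bounded elim!: eventually_mono)
  moreover have "0 < ereal c" "ereal C < \<infinity>"
    using \<open>c > 0\<close> by simp_all
  ultimately show "0 < ?lo \<and> ?up < \<infinity>"
    by (meson less_le_trans le_less_trans)
next
  assume bounds: "0 < ?lo \<and> ?up < \<infinity>"
  then obtain c where c: "0 < ereal c" "ereal c < ?lo"
    using ereal_dense2 by blast
  have "max ?up 0 < \<infinity>"
    using bounds by (simp add: max_def)
  then obtain C where C: "max ?up 0 < ereal C"
    using ereal_dense2 by blast
  then have "?up < ereal C" "0 < C"
    by auto
  have "\<forall>\<^sub>F x in at_top. c * g x \<le> f x"
    using less_LiminfD[OF c(2)] assms by eventually_elim (simp add: field_simps)
  moreover have "\<forall>\<^sub>F x in at_top. f x \<le> C * g x"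
    using Limsup_lessD[OF \<open>?up < ereal C\<close>] assms by eventually_elim (simp add: field_simps)
  ultimately show "comparable_at_top f g"
    using c \<open>0 < C\<close> by (intro comparable_at_topI) auto
qed

lemma eventually_at_top_dilations:
  fixes P :: "real \<Rightarrow> bool"
  assumes "\<forall>\<^sub>F x in at_top. P x"
  shows "\<forall>\<^sub>F x in at_top. \<forall>l\<ge>1. P (l * x)"
proof -
  obtain x0 where x0: "\<And>x. x \<ge> x0 \<Longrightarrow> P x"
    using assms by (auto simp: eventually_at_top_linorder)
  have "P (l * x)" if "x \<ge> max x0 0" "l \<ge> 1" for x l
  proof (rule x0)
    have "x \<le> l * x"
      using that by (simp add: mult_le_cancel_right1)
    then show "x0 \<le> l * x"
      using that by linarith
  qed
  then show ?thesis
    unfolding eventually_at_top_linorder by (intro exI[of _ "max x0 0"]) auto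
qed

lemma eventually_at_top_unscale:
  fixes P :: "real \<Rightarrow> bool"
  assumes "c > 0" "\<forall>\<^sub>F x in at_top. P (c * x)"
  shows "\<forall>\<^sub>F x in at_top. P x"
proof -
  obtain x0 where x0: "\<And>x. x \<ge> x0 \<Longrightarrow> P (c * x)"
    using assms(2) by (auto simp: eventually_at_top_linorder)
  have "P x" if "x \<ge> c * x0" for x
    using x0[of "x / c"] that \<open>c > 0\<close> by (simp add: field_simps)
  then show ?thesis
    by (auto simp: eventually_at_top_linorder)
qed

lemma dilation_quotient_le_if_comparable_at_top:
  assumes "comparable_at_top f g" "\<forall>\<^sub>F x in at_top. 0 < g x"
  shows "\<exists>K>0. \<forall>\<^sub>F x in at_top. \<forall>l\<ge>1.
           f (l * x) / (l powr a * f x) \<le> K * (g (l * x) / (l powr a * g x))"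
proof -
  obtain c C where "c > 0" "C > 0"
    and cC: "\<forall>\<^sub>F x in at_top. c * g x \<le> f x \<and> f x \<le> C * g x"
    using assms(1) unfolding comparable_at_top_def by blast
  from cC assms(2) have "\<forall>\<^sub>F x in at_top. f x \<le> C * g x \<and> 0 < g x"
    by eventually_elim simp
  then have "\<forall>\<^sub>F x in at_top. \<forall>l\<ge>1. f (l * x) \<le> C * g (l * x) \<and> 0 < g (l * x)"
    by (rule eventually_at_top_dilations)
  with cC assms(2) have "\<forall>\<^sub>F x in at_top. \<forall>l\<ge>1.
      f (l * x) / (l powr a * f x) \<le> C / c * (g (l * x) / (l powr a * g x))"
  proof eventually_elim
    case (elim x)
    show ?case
    proof (intro allI impI)
      fix l :: real
      assume "l \<ge> 1"
      then have "0 < l powr a" "f (l * x) \<le> C * g (l * x)" "0 < g (l * x)"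
        using elim(3) by auto
      moreover have "0 < c * g x" "c * g x \<le> f x"
        using elim(1,2) \<open>c > 0\<close> by auto
      ultimately have "f (l * x) / (l powr a * f x) \<le> C * g (l * x) / (l powr a * (c * g x))"
        using \<open>C > 0\<close> by (intro frac_le mult_left_mono) auto
      also have "\<dots> = C / c * (g (l * x) / (l powr a * g x))"
        by simp
      finally show "f (l * x) / (l powr a * f x) \<le> C / c * (g (l * x) / (l powr a * g x))" .
    qed
  qed
  then show ?thesis
    using \<open>c > 0\<close> \<open>C > 0\<close> by (intro exI[of _ "C / c"]) auto
qed

lemma alpha_admissible_if_comparable_at_top:
  assumes "comparable_at_top f g" "\<forall>\<^sub>F x in at_top. 0 < g x" "alpha_admissible g a"
  shows "alpha_admissible f a"
proof -
  obtain K where "K > 0" and K: "\<forall>\<^sub>F x in at_top. \<forall>l\<ge>1.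
      f (l * x) / (l powr a * f x) \<le> K * (g (l * x) / (l powr a * g x))"
    using dilation_quotient_le_if_comparable_at_top[OF assms(1,2)] by blast
  obtain C where "C > 0"
    and C: "\<And>\<Lambda>. \<Lambda> > 1 \<Longrightarrow> \<forall>\<^sub>F x in at_top. \<forall>l\<in>{1..\<Lambda>}. g (l * x) / (l powr a * g x) \<le> C"
    using assms(3) unfolding alpha_admissible_def by blast
  have "\<forall>\<^sub>F x in at_top. \<forall>l\<in>{1..\<Lambda>}. f (l * x) / (l powr a * f x) \<le> K * C" if "\<Lambda> > 1" for \<Lambda>
    using K C[OF that]
  proof eventually_elim
    case (elim x)
    show ?case
    proof
      fix l :: real
      assume l: "l \<in> {1..\<Lambda>}"
      then have "f (l * x) / (l powr a * f x) \<le> K * (g (l * x) / (l powr a * g x))"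
        using elim(1) by auto
      also have "\<dots> \<le> K * C"
        using elim(2) l \<open>K > 0\<close> by (intro mult_left_mono) auto
      finally show "f (l * x) / (l powr a * f x) \<le> K * C" .
    qed
  qed
  then show ?thesis
    unfolding alpha_admissible_def using \<open>K > 0\<close> \<open>C > 0\<close> by (intro exI[of _ "K * C"]) auto
qed

lemma beta_admissible_if_comparable_at_top:
  assumes "comparable_at_top f g" "\<forall>\<^sub>F x in at_top. 0 < g x" "beta_admissible f b"
  shows "beta_admissible g b"
proof -
  obtain K where "K > 0" and K: "\<forall>\<^sub>F x in at_top. \<forall>l\<ge>1.
      f (l * x) / (l powr b * f x) \<le> K * (g (l * x) / (l powr b * g x))"
    using dilation_quotient_le_if_comparable_at_top[OF assms(1,2)] by blast
  obtain D where "D > 0"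
    and D: "\<And>\<Lambda>. \<Lambda> > 1 \<Longrightarrow> \<forall>\<^sub>F x in at_top. \<forall>l\<in>{1..\<Lambda>}. D \<le> f (l * x) / (l powr b * f x)"
    using assms(3) unfolding beta_admissible_def by blast
  have "\<forall>\<^sub>F x in at_top. \<forall>l\<in>{1..\<Lambda>}. D / K \<le> g (l * x) / (l powr b * g x)" if "\<Lambda> > 1" for \<Lambda>
    using K D[OF that]
  proof eventually_elim
    case (elim x)
    show ?case
    proof
      fix l :: real
      assume l: "l \<in> {1..\<Lambda>}"
      then have "D \<le> K * (g (l * x) / (l powr b * g x))"
        using elim by (meson atLeastAtMost_iff order_trans)
      then show "D / K \<le> g (l * x) / (l powr b * g x)"
        using \<open>K > 0\<close> by (simp add: divide_le_eq mult.commute)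
    qed
  qed
  then show ?thesis
    unfolding beta_admissible_def using \<open>K > 0\<close> \<open>D > 0\<close> by (intro exI[of _ "D / K"]) auto
qed

lemma indices_eq_if_comparable_at_top:
  assumes "comparable_at_top f g" "\<forall>\<^sub>F x in at_top. 0 < g x"
  shows "alpha_idx f = alpha_idx g" "beta_idx f = beta_idx g"
proof -
  have sym: "comparable_at_top g f" "\<forall>\<^sub>F x in at_top. 0 < f x"
    using assms comparable_at_top_sym comparable_at_top_eventually_pos by blast+
  have "alpha_admissible f = alpha_admissible g"
    using alpha_admissible_if_comparable_at_top[OF assms] alpha_admissible_if_comparable_at_top[OF sym]
    by blast
  moreover have "beta_admissible f = beta_admissible g"
    using beta_admissible_if_comparable_at_top[OF assms] beta_admissible_if_comparable_at_top[OF sym]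
    by blast
  ultimately show "alpha_idx f = alpha_idx g" "beta_idx f = beta_idx g"
    unfolding alpha_idx_eq_Inf_admissible beta_idx_eq_Sup_admissible by simp_all
qed

lemma doubling_power_le:
  fixes h :: "real \<Rightarrow> real"
  assumes "q \<ge> 1" "x0 \<ge> 0" "\<forall>x\<ge>x0. h (q * x) \<le> 2 * h x" "x \<ge> x0"
  shows "h (q ^ n * x) \<le> 2 ^ n * h x"
proof (induction n)
  case 0
  show ?case by simp
next
  case (Suc n)
  have "x \<le> q ^ n * x"
    using assms by (simp add: mult_le_cancel_right1 one_le_power)
  then have "h (q * (q ^ n * x)) \<le> 2 * h (q ^ n * x)"
    using assms by auto
  also have "\<dots> \<le> 2 * (2 ^ n * h x)"
    using Suc by simp
  finally show ?case
    by (simp add: mult.assoc)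
qed

lemma doubling_power_ge:
  fixes h :: "real \<Rightarrow> real"
  assumes "q \<ge> 1" "x0 \<ge> 0" "\<forall>x\<ge>x0. 2 * h x \<le> h (q * x)" "x \<ge> x0"
  shows "2 ^ n * h x \<le> h (q ^ n * x)"
  using doubling_power_le[of q x0 "\<lambda>x. - h x"] assms by simp

lemma power_bracket:
  fixes q l :: real
  assumes "q > 1" "l \<ge> 1"
  obtains n where "q ^ n \<le> l" "l < q ^ Suc n"
proof -
  have "\<exists>n. \<not> l < q ^ n \<and> l < q ^ Suc n"
    using assms real_arch_pow[OF assms(1), of l] by (intro exists_least_lemma) auto
  then show ?thesis
    using that by (auto simp: not_less)
qed

lemma power_powr_log:
  fixes q :: real
  assumes "q > 1"
  shows "(q ^ n) powr log q 2 = 2 ^ n"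
proof -
  have "(q ^ n) powr log q 2 = q powr (real n * log q 2)"
    using assms by (simp add: powr_realpow[symmetric] powr_powr)
  also have "\<dots> = (q powr log q 2) ^ n"
    using assms by (subst powr_power) auto
  finally show ?thesis
    using assms by simp
qed

lemma alpha_admissible_if_doubling:
  fixes h :: "real \<Rightarrow> real"
  assumes "q > 1"
    and "\<forall>\<^sub>F x in at_top. 0 < h x \<and> h (q * x) \<le> 2 * h x \<and> (\<forall>y\<ge>x. h x \<le> h y)"
  shows "alpha_admissible h (log q 2)"
proof -
  obtain x0 where x0: "\<And>x. x \<ge> x0 \<Longrightarrow>
      (0 < h x \<and> h (q * x) \<le> 2 * h x \<and> (\<forall>y\<ge>x. h x \<le> h y)) \<and> 0 \<le> x"
    using eventually_conj[OF assms(2) eventually_ge_at_top[of 0]]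
    unfolding eventually_at_top_linorder by blast
  have "h (l * x) \<le> 2 * (l powr log q 2 * h x)" if "x \<ge> x0" "l \<ge> 1" for x l
  proof -
    obtain n where n: "q ^ n \<le> l" "l < q ^ Suc n"
      using power_bracket[OF assms(1) \<open>l \<ge> 1\<close>] .
    have "0 \<le> x"
      using that x0 by blast
    then have "x \<le> l * x"
      using that by (simp add: mult_le_cancel_right1)
    moreover have "l * x \<le> q ^ Suc n * x"
      using n \<open>0 \<le> x\<close> by (intro mult_right_mono) auto
    ultimately have "h (l * x) \<le> h (q ^ Suc n * x)"
      using x0 \<open>x \<ge> x0\<close> by (meson order_trans)
    also have "\<dots> \<le> 2 ^ Suc n * h x"
      using x0 that assms(1) by (intro doubling_power_le[of _ x0]) (auto intro: order_trans)
    also have "\<dots> = 2 * ((q ^ n) powr log q 2 * h x)"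
      using assms(1) by (simp add: power_powr_log)
    also have "\<dots> \<le> 2 * (l powr log q 2 * h x)"
      using n assms(1) x0 that by (auto intro!: mult_right_mono powr_mono2)
    finally show ?thesis .
  qed
  then have "\<forall>x\<ge>x0. \<forall>l\<ge>1. h (l * x) / (l powr log q 2 * h x) \<le> 2"
    using x0 by (auto simp: divide_le_eq mult.assoc)
  then show ?thesis
    unfolding alpha_admissible_def eventually_at_top_linorder
    by (intro exI[of _ 2] conjI allI impI exI[of _ x0]) auto
qed

lemma beta_admissible_if_doubling:
  fixes h :: "real \<Rightarrow> real"
  assumes "q > 1"
    and "\<forall>\<^sub>F x in at_top. 0 < h x \<and> 2 * h x \<le> h (q * x) \<and> (\<forall>y\<ge>x. h x \<le> h y)"
  shows "beta_admissible h (log q 2)"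
proof -
  obtain x0 where x0: "\<And>x. x \<ge> x0 \<Longrightarrow>
      (0 < h x \<and> 2 * h x \<le> h (q * x) \<and> (\<forall>y\<ge>x. h x \<le> h y)) \<and> 0 \<le> x"
    using eventually_conj[OF assms(2) eventually_ge_at_top[of 0]]
    unfolding eventually_at_top_linorder by blast
  have "l powr log q 2 * h x \<le> 2 * h (l * x)" if "x \<ge> x0" "l \<ge> 1" for x l
  proof -
    obtain n where n: "q ^ n \<le> l" "l < q ^ Suc n"
      using power_bracket[OF assms(1) \<open>l \<ge> 1\<close>] .
    have "l powr log q 2 * h x \<le> (q ^ Suc n) powr log q 2 * h x"
      using n assms(1) x0 that by (auto intro!: mult_right_mono powr_mono2)
    also have "\<dots> = 2 * (2 ^ n * h x)"
      using power_powr_log[OF assms(1), of "Suc n"] by simp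
    also have "\<dots> \<le> 2 * h (q ^ n * x)"
      using x0 that assms(1) by (auto intro!: doubling_power_ge[of _ x0] intro: order_trans)
    also have "\<dots> \<le> 2 * h (l * x)"
    proof -
      have "0 \<le> x"
        using that x0 by blast
      then have "x \<le> q ^ n * x"
        using assms(1) by (simp add: mult_le_cancel_right1 one_le_power)
      moreover have "q ^ n * x \<le> l * x"
        using n \<open>0 \<le> x\<close> by (intro mult_right_mono) auto
      ultimately show ?thesis
        using x0 \<open>x \<ge> x0\<close> by (meson mult_left_mono order_trans zero_le_numeral)
    qed
    finally show ?thesis .
  qed
  then have "\<forall>x\<ge>x0. \<forall>l\<ge>1. 1 / 2 \<le> h (l * x) / (l powr log q 2 * h x)"
    using x0 by (auto simp: le_divide_eq mult.commute)
  then show ?thesis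
    unfolding beta_admissible_def eventually_at_top_linorder
    by (intro exI[of _ "1 / 2"] conjI allI impI exI[of _ x0]) auto
qed

lemma dilation_le_if_alpha_admissible:
  fixes h :: "real \<Rightarrow> real"
  assumes "alpha_admissible h a" "\<forall>\<^sub>F x in at_top. 0 < h x" "l \<ge> 1"
  shows "\<exists>K>0. \<forall>\<^sub>F x in at_top. h (l * x) \<le> K * h x"
proof -
  obtain C where "C > 0"
    and C: "\<forall>\<^sub>F x in at_top. \<forall>l'\<in>{1..l + 1}. h (l' * x) / (l' powr a * h x) \<le> C"
    using assms(1,3) unfolding alpha_admissible_def by fastforce
  from C assms(2) have "\<forall>\<^sub>F x in at_top. h (l * x) \<le> C * l powr a * h x"
    by eventually_elim (use assms(3) in \<open>auto simp: divide_le_eq mult.assoc\<close>)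
  then show ?thesis
    using \<open>C > 0\<close> assms(3) by (intro exI[of _ "C * l powr a"]) auto
qed

lemma doubling_if_beta_admissible:
  fixes h :: "real \<Rightarrow> real"
  assumes "beta_admissible h b" "b > 0" "\<forall>\<^sub>F x in at_top. 0 < h x"
  shows "\<exists>q>1. \<forall>\<^sub>F x in at_top. 2 * h x \<le> h (q * x)"
proof -
  obtain D where "D > 0"
    and D: "\<And>\<Lambda>. \<Lambda> > 1 \<Longrightarrow> \<forall>\<^sub>F x in at_top. \<forall>l\<in>{1..\<Lambda>}. D \<le> h (l * x) / (l powr b * h x)"
    using assms(1) unfolding beta_admissible_def by blast
  define q where "q = max 2 ((2 / D) powr (1 / b))"
  have "q > 1"
    unfolding q_def by simp
  have "2 / D = ((2 / D) powr (1 / b)) powr b"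
    using \<open>D > 0\<close> \<open>b > 0\<close> by (simp add: powr_powr)
  also have "\<dots> \<le> q powr b"
    unfolding q_def using \<open>b > 0\<close> by (intro powr_mono2) auto
  finally have "2 \<le> D * q powr b"
    using \<open>D > 0\<close> by (simp add: divide_le_eq mult.commute)
  from D[OF \<open>q > 1\<close>] assms(3) have "\<forall>\<^sub>F x in at_top. 2 * h x \<le> h (q * x)"
  proof eventually_elim
    case (elim x)
    then have "D * q powr b * h x \<le> h (q * x)"
      using \<open>q > 1\<close> by (auto simp: le_divide_eq mult.assoc)
    moreover have "2 * h x \<le> D * q powr b * h x"
      using \<open>2 \<le> D * q powr b\<close> elim(2) by (intro mult_right_mono) auto
    ultimately show ?case
      by linarith
  qed
  then show ?thesis
    using \<open>q > 1\<close> by blast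
qed

text \<open>
  The inequalities satisfied by g t = integral of f s / s over (0, t] when f is nondecreasing.
\<close>

locale log_integral_bounds =
  fixes f g :: "real \<Rightarrow> real"
  assumes f_nonneg: "0 < x \<Longrightarrow> 0 \<le> f x"
    and g_nonneg: "0 < x \<Longrightarrow> 0 \<le> g x"
    and eventually_f_pos: "\<forall>\<^sub>F x in at_top. 0 < f x"
    and g_lower: "0 < x \<Longrightarrow> x \<le> y \<Longrightarrow> g x + f x * ln (y / x) \<le> g y"
    and g_upper: "0 < x \<Longrightarrow> x \<le> y \<Longrightarrow> g y \<le> g x + f y * ln (y / x)"
begin

lemma f_mono:
  assumes "0 < x" "x \<le> y"
  shows "f x \<le> f y"
proof (cases "x = y")
  case False
  with assms have "0 < ln (y / x)"
    by simp
  moreover have "f x * ln (y / x) \<le> f y * ln (y / x)"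
    using g_lower[OF assms] g_upper[OF assms] by linarith
  ultimately show ?thesis
    by simp
qed simp

lemma g_mono:
  assumes "0 < x" "x \<le> y"
  shows "g x \<le> g y"
proof -
  have "0 \<le> f x * ln (y / x)"
    using assms f_nonneg[of x] by simp
  then show ?thesis
    using g_lower[OF assms] by linarith
qed

lemma g_dilation:
  assumes "0 < x" "q \<ge> 1"
  shows "g x + f x * ln q \<le> g (q * x)" "g (q * x) \<le> g x + f (q * x) * ln q"
  using g_lower[of x "q * x"] g_upper[of x "q * x"] assms by simp_all

lemma f_le_g_dilated:
  assumes "0 < x"
  shows "f x \<le> g (exp 1 * x)"
  using g_dilation(1)[of x "exp 1"] g_nonneg[of x] assms by simp

lemma eventually_g_pos: "\<forall>\<^sub>F x in at_top. 0 < g x"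
proof -
  obtain x0 where "x0 > 0" "0 < f x0"
    using eventually_conj[OF eventually_f_pos eventually_gt_at_top[of 0]]
    unfolding eventually_at_top_linorder by auto
  have pos: "0 < g x" if "x > x0" for x
  proof -
    have "0 < f x0 * ln (x / x0)"
      using that \<open>x0 > 0\<close> \<open>0 < f x0\<close> by simp
    also have "\<dots> \<le> g x"
      using g_lower[of x0 x] g_nonneg[of x0] that \<open>x0 > 0\<close> by linarith
    finally show ?thesis .
  qed
  show ?thesis
    by (rule eventually_mono[OF eventually_gt_at_top[of x0] pos])
qed

lemma eventually_g_mono: "\<forall>\<^sub>F x in at_top. \<forall>y\<ge>x. g x \<le> g y"
  using eventually_gt_at_top[of 0] by eventually_elim (auto intro: g_mono)

lemma g_indices_if_comparable_at_top:
  assumes "comparable_at_top f g"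
  shows "alpha_idx g < \<infinity>" "0 < beta_idx g"
proof -
  obtain c C where "c > 0" "C > 0" and cC: "\<forall>\<^sub>F x in at_top. c * g x \<le> f x \<and> f x \<le> C * g x"
    using assms unfolding comparable_at_top_def by blast
  define q where "q = exp (1 / (2 * C))"
  have "q > 1" "ln q = 1 / (2 * C)"
    unfolding q_def using \<open>C > 0\<close> by auto
  have "\<forall>\<^sub>F x in at_top. \<forall>l\<ge>1. f (l * x) \<le> C * g (l * x)"
    using cC by (rule eventually_at_top_dilations[OF eventually_mono]) simp
  then have "\<forall>\<^sub>F x in at_top. g (q * x) \<le> 2 * g x"
    using eventually_gt_at_top[of 0]
  proof eventually_elim
    case (elim x)
    have "g (q * x) \<le> g x + f (q * x) * ln q"
      using g_dilation elim(2) \<open>q > 1\<close> by simp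
    moreover have "f (q * x) * ln q \<le> C * g (q * x) * ln q"
      using elim(1) \<open>q > 1\<close> by (intro mult_right_mono) auto
    moreover have "C * g (q * x) * ln q = g (q * x) / 2"
      using \<open>ln q = 1 / (2 * C)\<close> \<open>C > 0\<close> by simp
    ultimately show ?case
      by simp
  qed
  with eventually_g_pos eventually_g_mono
  have "\<forall>\<^sub>F x in at_top. 0 < g x \<and> g (q * x) \<le> 2 * g x \<and> (\<forall>y\<ge>x. g x \<le> g y)"
    by eventually_elim blast
  then have "alpha_admissible g (log q 2)"
    by (rule alpha_admissible_if_doubling[OF \<open>q > 1\<close>])
  then show "alpha_idx g < \<infinity>"
    unfolding alpha_idx_less_infinity_iff by blast
  define p where "p = exp (1 / c)"
  have "p > 1" "ln p = 1 / c"
    unfolding p_def using \<open>c > 0\<close> by auto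
  have "\<forall>\<^sub>F x in at_top. 2 * g x \<le> g (p * x)"
    using cC eventually_gt_at_top[of 0]
  proof eventually_elim
    case (elim x)
    have "g x = c * g x * ln p"
      using \<open>ln p = 1 / c\<close> \<open>c > 0\<close> by simp
    also have "\<dots> \<le> f x * ln p"
      using elim(1) \<open>p > 1\<close> by (intro mult_right_mono) auto
    finally show ?case
      using g_dilation(1)[of x p] elim(2) \<open>p > 1\<close> by simp
  qed
  with eventually_g_pos eventually_g_mono
  have "\<forall>\<^sub>F x in at_top. 0 < g x \<and> 2 * g x \<le> g (p * x) \<and> (\<forall>y\<ge>x. g x \<le> g y)"
    by eventually_elim blast
  then have "beta_admissible g (log p 2)"
    by (rule beta_admissible_if_doubling[OF \<open>p > 1\<close>])
  moreover have "log p 2 > 0"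
    using \<open>p > 1\<close> by simp
  ultimately show "0 < beta_idx g"
    unfolding beta_idx_pos_iff by blast
qed

lemma eventually_g_le_f_if_g_doubling:
  assumes "q > 1" "\<forall>\<^sub>F x in at_top. 2 * g x \<le> g (q * x)"
  shows "\<forall>\<^sub>F x in at_top. 1 / (2 * ln q) * g x \<le> f x"
proof -
  from assms(2) eventually_gt_at_top[of 0]
  have "\<forall>\<^sub>F x in at_top. g (q * x) \<le> 2 * (f (q * x) * ln q)"
  proof eventually_elim
    case (elim x)
    then show ?case
      using g_dilation(2)[of x q] \<open>q > 1\<close> by simp
  qed
  then have "\<forall>\<^sub>F x in at_top. g x \<le> 2 * (f x * ln q)"
    using \<open>q > 1\<close> eventually_at_top_unscale[of q "\<lambda>x. g x \<le> 2 * (f x * ln q)"] by simp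
  moreover have "0 < ln q"
    using \<open>q > 1\<close> by simp
  ultimately show ?thesis
    by (auto elim!: eventually_mono simp: field_simps)
qed

lemma comparable_at_top_if_g_indices:
  assumes "alpha_idx g < \<infinity>" "0 < beta_idx g"
  shows "comparable_at_top f g"
proof -
  obtain a b where "alpha_admissible g a" "beta_admissible g b" "b > 0"
    using assms unfolding alpha_idx_less_infinity_iff beta_idx_pos_iff by blast
  have "1 \<le> exp (1 :: real)"
    by simp
  from dilation_le_if_alpha_admissible[OF \<open>alpha_admissible g a\<close> eventually_g_pos this]
  obtain K where "K > 0" and K: "\<forall>\<^sub>F x in at_top. g (exp 1 * x) \<le> K * g x"
    by (elim exE conjE)
  from K eventually_gt_at_top[of 0] have "\<forall>\<^sub>F x in at_top. f x \<le> K * g x"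
    by eventually_elim (use f_le_g_dilated in \<open>fastforce intro: order_trans\<close>)
  moreover obtain q where "q > 1" "\<forall>\<^sub>F x in at_top. 2 * g x \<le> g (q * x)"
    using doubling_if_beta_admissible[OF \<open>beta_admissible g b\<close> \<open>b > 0\<close> eventually_g_pos] by blast
  ultimately show ?thesis
    using \<open>K > 0\<close> eventually_g_le_f_if_g_doubling
    by (intro comparable_at_topI[where c = "1 / (2 * ln q)" and C = K]) auto
qed

text \<open>
  By induction over the ranges [z, q^n z]: g x \<le> g (x/q) + ln q * f x and f (x/q) \<le> f x / 2,
  so a bound g \<le> K f with 2 ln q \<le> K propagates from one range to the next.
\<close>

lemma g_le_mult_f_if_doubling:
  assumes "q > 1" "z > 0" "0 < f z" and doubling: "\<forall>y\<ge>z. 2 * f y \<le> f (q * y)"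
  shows "\<exists>K>0. \<forall>x\<ge>z. g x \<le> K * f x"
proof -
  define K where "K = max (g (q * z) / f z) (2 * ln q)"
  have "2 * ln q \<le> K"
    unfolding K_def by simp
  moreover have "0 < 2 * ln q"
    using \<open>q > 1\<close> by simp
  ultimately have "0 < K"
    by linarith
  have base: "g x \<le> K * f x" if "z \<le> x" "x \<le> q * z" for x
  proof -
    have "g x \<le> g (q * z)"
      using g_mono that \<open>z > 0\<close> by auto
    also have "\<dots> = g (q * z) / f z * f z"
      using \<open>0 < f z\<close> by simp
    also have "\<dots> \<le> K * f x"
        using f_mono[of z x] that \<open>z > 0\<close> \<open>0 < f z\<close> \<open>0 < K\<close>
      by (intro mult_mono) (auto simp: K_def)
    finally show ?thesis .
  qed
  have "g x \<le> K * f x" if "z \<le> x" "x \<le> q ^ n * z" for n x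
    using that
  proof (induction n arbitrary: x)
    case 0
    then show ?case
      using base \<open>q > 1\<close> \<open>z > 0\<close> by simp
  next
    case (Suc n)
    show ?case
    proof (cases "x \<le> q * z")
      case True
      then show ?thesis
        using base Suc.prems by blast
    next
      case False
      define y where "y = x / q"
      have "x = q * y" "z \<le> y" "y \<le> q ^ n * z"
        using False Suc.prems \<open>q > 1\<close> by (auto simp: y_def field_simps)
      have "g x \<le> g y + f x * ln q"
        using g_dilation(2)[of y q] \<open>x = q * y\<close> \<open>z \<le> y\<close> \<open>z > 0\<close> \<open>q > 1\<close> by simp
      moreover have "g y \<le> K * f y"
        using Suc.IH \<open>z \<le> y\<close> \<open>y \<le> q ^ n * z\<close> by blast
      moreover have "K * f y \<le> K * f x / 2"
        using doubling \<open>z \<le> y\<close> \<open>x = q * y\<close> \<open>0 < K\<close> by auto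
      moreover have "f x * ln q \<le> f x * (K / 2)"
        using \<open>2 * ln q \<le> K\<close> f_nonneg[of x] Suc.prems \<open>z > 0\<close> by (intro mult_left_mono) auto
      ultimately show ?thesis
        by (simp add: field_simps)
    qed
  qed
  moreover have "\<exists>n. x \<le> q ^ n * z" for x
    using real_arch_pow[OF \<open>q > 1\<close>, of "x / z"] \<open>z > 0\<close> by (auto simp: field_simps intro: less_imp_le)
  ultimately show ?thesis
    using \<open>0 < K\<close> by blast
qed

lemma comparable_at_top_if_f_indices:
  assumes "alpha_idx f < \<infinity>" "0 < beta_idx f"
  shows "comparable_at_top f g"
proof -
  obtain a b where "alpha_admissible f a" "beta_admissible f b" "b > 0"
    using assms unfolding alpha_idx_less_infinity_iff beta_idx_pos_iff by blast
  have "1 \<le> exp (1 :: real)"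
    by simp
  from dilation_le_if_alpha_admissible[OF \<open>alpha_admissible f a\<close> eventually_f_pos this]
  obtain K where "K > 0" and K: "\<forall>\<^sub>F x in at_top. f (exp 1 * x) \<le> K * f x"
    by (elim exE conjE)
  from K eventually_gt_at_top[of 0]
  have "\<forall>\<^sub>F x in at_top. f (exp 1 * x) \<le> K * g (exp 1 * x)"
    by eventually_elim (use f_le_g_dilated \<open>K > 0\<close> in \<open>fastforce intro: order_trans\<close>)
  then have upper: "\<forall>\<^sub>F x in at_top. f x \<le> K * g x"
    using eventually_at_top_unscale[of "exp 1" "\<lambda>x. f x \<le> K * g x"] by simp
  obtain q where "q > 1" and q: "\<forall>\<^sub>F x in at_top. 2 * f x \<le> f (q * x)"
    using doubling_if_beta_admissible[OF \<open>beta_admissible f b\<close> \<open>b > 0\<close> eventually_f_pos] by blast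
  obtain z where "\<And>x. x \<ge> z \<Longrightarrow> 2 * f x \<le> f (q * x) \<and> 0 < f x \<and> 0 < x"
    using eventually_conj[OF q eventually_conj[OF eventually_f_pos eventually_gt_at_top[of 0]]]
    unfolding eventually_at_top_linorder by blast
  then obtain L where "L > 0" and L: "\<forall>x\<ge>z. g x \<le> L * f x"
    using g_le_mult_f_if_doubling[OF \<open>q > 1\<close>] by blast
  then have "\<forall>\<^sub>F x in at_top. 1 / L * g x \<le> f x"
    unfolding eventually_at_top_linorder by (intro exI[of _ z]) (simp add: field_simps)
  with upper show ?thesis
    using \<open>L > 0\<close> \<open>K > 0\<close> by (intro comparable_at_topI[where c = "1 / L" and C = K]) auto
qed

lemma comparable_at_top_iff_g_indices:
  "comparable_at_top f g \<longleftrightarrow> 0 < beta_idx g \<and> alpha_idx g < \<infinity>"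
  using comparable_at_top_if_g_indices g_indices_if_comparable_at_top by blast

lemma comparable_at_top_iff_f_indices:
  "comparable_at_top f g \<longleftrightarrow> 0 < beta_idx f \<and> alpha_idx f < \<infinity>"
  using comparable_at_top_if_f_indices g_indices_if_comparable_at_top
    indices_eq_if_comparable_at_top[OF _ eventually_g_pos] by metis

end

lemma le_at_peak:
  fixes s :: "nat \<Rightarrow> 'a::order"
  assumes up: "\<And>j. j < N \<Longrightarrow> s j \<le> s (Suc j)" and down: "\<And>j. N \<le> j \<Longrightarrow> s (Suc j) \<le> s j"
  shows "s p \<le> s N"
proof (cases "p \<le> N")
  case True
  then show ?thesis
  proof (induction rule: dec_induct)
    case (step n)
    then show ?case
      using up[of n] by (blast intro: order_trans)
  qed simp
next
  case False
  then have "N \<le> p"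
    by simp
  then show ?thesis
  proof (induction rule: dec_induct)
    case (step n)
    then show ?case
      using down[of n] by (blast intro: order_trans)
  qed simp
qed

text \<open>
  A junk value if m is bounded by t; for a weight sequence it is nu_m (quotients M) t as a
  natural number.
\<close>

definition quotient_count :: "(nat \<Rightarrow> real) \<Rightarrow> real \<Rightarrow> nat" where
  "quotient_count m t = (LEAST j. t < m j)"

context
  fixes M :: "nat \<Rightarrow> real"
  assumes M: "weight_sequence M"
begin

lemma weight_sequence_pos: "0 < M p"
  using M unfolding weight_sequence_def by blast

lemma quotients_pos: "0 < quotients M p"
  using weight_sequence_pos[of p] weight_sequence_pos[of "Suc p"] unfolding quotients_def by simp

lemma weight_sequence_Suc: "M (Suc p) = quotients M p * M p"
  using weight_sequence_pos[of p] unfolding quotients_def by simp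

lemma quotients_mono:
  assumes "i \<le> j"
  shows "quotients M i \<le> quotients M j"
proof -
  have "quotients M p \<le> quotients M (Suc p)" for p
  proof -
    have "M (Suc p) * M (Suc p) \<le> M p * M (Suc (Suc p))"
      using M unfolding weight_sequence_def power2_eq_square
      by (metis Suc_eq_plus1 diff_Suc_1 le_add2)
    then show ?thesis
      using weight_sequence_pos[of p] weight_sequence_pos[of "Suc p"]
      unfolding quotients_def by (simp add: divide_simps mult.commute)
  qed
  then show ?thesis
    using lift_Suc_mono_le[of "quotients M"] assms by blast
qed

lemma quotients_unbounded: "\<exists>j. t < quotients M j"
proof (rule ccontr)
  assume "\<not> (\<exists>j. t < quotients M j)"
  then have bounded: "quotients M j \<le> t" for j
    by (simp add: not_less)
  then have "0 < t"
    using quotients_pos[of 0] by (meson less_le_trans)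
  have M_le: "M p \<le> t ^ p" for p
  proof (induction p)
    case (Suc p)
    then show ?case
      using bounded[of p] quotients_pos[of p] weight_sequence_pos[of p]
      by (simp add: weight_sequence_Suc mult_mono)
  qed (use M in \<open>simp add: weight_sequence_def\<close>)
  have "\<forall>\<^sub>F p in sequentially. t < M p powr (1 / real p)"
    using M unfolding weight_sequence_def filterlim_at_top_dense by blast
  then obtain N where N: "\<And>p. p \<ge> N \<Longrightarrow> t < M p powr (1 / real p)"
    unfolding eventually_sequentially by blast
  define p where "p = max N 1"
  have "p \<ge> 1"
    unfolding p_def by simp
  have "t < M p powr (1 / real p)"
    using N unfolding p_def by simp
  also have "M p powr (1 / real p) \<le> (t ^ p) powr (1 / real p)"
    using M_le weight_sequence_pos[of p] by (intro powr_mono2) auto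
  also have "\<dots> = t"
    using \<open>0 < t\<close> \<open>p \<ge> 1\<close> by (simp add: powr_realpow[symmetric] powr_powr)
  finally show False
    by simp
qed

lemma quotients_le_eq_lessThan:
  "{j. quotients M j \<le> t} = {..<quotient_count (quotients M) t}"
proof -
  have count: "t < quotients M (quotient_count (quotients M) t)"
    unfolding quotient_count_def using quotients_unbounded by (rule LeastI_ex)
  show ?thesis
  proof (intro set_eqI iffI)
    fix j
    assume "j \<in> {j. quotients M j \<le> t}"
    then show "j \<in> {..<quotient_count (quotients M) t}"
      using quotients_mono[of "quotient_count (quotients M) t" j] count by (auto simp: not_le[symmetric])
  next
    fix j
    assume "j \<in> {..<quotient_count (quotients M) t}"
    then show "j \<in> {j. quotients M j \<le> t}"
      unfolding quotient_count_def using not_less_Least by fastforce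
  qed
qed

lemma nu_m_eq_quotient_count:
  "0 < t \<Longrightarrow> nu_m (quotients M) t = real (quotient_count (quotients M) t)"
  unfolding nu_m_def quotients_le_eq_lessThan by simp

lemma ln_power_div_weight_sequence:
  "0 < t \<Longrightarrow> ln (t ^ p / M p) = real p * ln t - ln (M p)"
  using weight_sequence_pos[of p] by (simp add: ln_div ln_realpow)

lemma ln_power_div_le_at_quotient_count:
  assumes "0 < t"
  shows "ln (t ^ p / M p) \<le> ln (t ^ quotient_count (quotients M) t / M (quotient_count (quotients M) t))"
proof (rule le_at_peak[where s = "\<lambda>p. ln (t ^ p / M p)"])
  have step: "ln (t ^ Suc j / M (Suc j)) = ln (t ^ j / M j) + (ln t - ln (quotients M j))" for j
  proof -
    have "ln (M (Suc j)) = ln (quotients M j) + ln (M j)"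
      using quotients_pos[of j] weight_sequence_pos[of j] by (simp add: weight_sequence_Suc ln_mult)
    then show ?thesis
      using ln_power_div_weight_sequence[OF assms, of j] ln_power_div_weight_sequence[OF assms, of "Suc j"]
      by (simp add: algebra_simps)
  qed
  show "ln (t ^ j / M j) \<le> ln (t ^ Suc j / M (Suc j))" if "j < quotient_count (quotients M) t" for j
  proof -
    have "quotients M j \<le> t"
      using that quotients_le_eq_lessThan[of t] by blast
    then have "ln (quotients M j) \<le> ln t"
      using quotients_pos[of j] by simp
    then show ?thesis
      using step[of j] by linarith
  qed
  show "ln (t ^ Suc j / M (Suc j)) \<le> ln (t ^ j / M j)" if "quotient_count (quotients M) t \<le> j" for j
  proof -
    have "t < quotients M j"
      using that quotients_le_eq_lessThan[of t] by (simp add: set_eq_iff not_le[symmetric])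
    then have "ln t < ln (quotients M j)"
      using assms by simp
    then show ?thesis
      using step[of j] by linarith
  qed
qed

lemma omegaM_eq_at_quotient_count:
  "0 < t \<Longrightarrow> omegaM M t = ln (t ^ quotient_count (quotients M) t / M (quotient_count (quotients M) t))"
  unfolding omegaM_def
  by (auto intro!: cSup_eq_maximum ln_power_div_le_at_quotient_count)

lemma ln_power_div_le_omegaM: "0 < t \<Longrightarrow> ln (t ^ p / M p) \<le> omegaM M t"
  using ln_power_div_le_at_quotient_count omegaM_eq_at_quotient_count by simp

lemma weight_sequence_log_integral_bounds: "log_integral_bounds (nu_m (quotients M)) (omegaM M)"
proof
  fix x :: real
  assume "0 < x"
  show "0 \<le> nu_m (quotients M) x"
    unfolding nu_m_def by simp
  show "0 \<le> omegaM M x"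
    using ln_power_div_le_omegaM[OF \<open>0 < x\<close>, of 0] M by (simp add: weight_sequence_def)
next
  have "0 < nu_m (quotients M) x" if "quotients M 0 \<le> x" for x
  proof -
    have "0 \<in> {..<quotient_count (quotients M) x}"
      using that quotients_le_eq_lessThan[of x] by blast
    then show ?thesis
      using nu_m_eq_quotient_count[of x] that quotients_pos[of 0] by simp
  qed
  then show "\<forall>\<^sub>F x in at_top. 0 < nu_m (quotients M) x"
    by (rule eventually_mono[OF eventually_ge_at_top])
next
  fix x y :: real
  assume "0 < x" "x \<le> y"
  then have "0 < y"
    by simp
  have ln_ratio: "ln (y / x) = ln y - ln x"
    using \<open>0 < x\<close> \<open>0 < y\<close> by (simp add: ln_div)
  note ln_power_div = ln_power_div_weight_sequence[OF \<open>0 < x\<close>] ln_power_div_weight_sequence[OF \<open>0 < y\<close>]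
  show "omegaM M x + nu_m (quotients M) x * ln (y / x) \<le> omegaM M y"
    using ln_power_div_le_omegaM[OF \<open>0 < y\<close>, of "quotient_count (quotients M) x"]
    unfolding omegaM_eq_at_quotient_count[OF \<open>0 < x\<close>] nu_m_eq_quotient_count[OF \<open>0 < x\<close>]
    by (simp add: ln_power_div ln_ratio algebra_simps)
  show "omegaM M y \<le> omegaM M x + nu_m (quotients M) y * ln (y / x)"
    using ln_power_div_le_omegaM[OF \<open>0 < x\<close>, of "quotient_count (quotients M) y"]
    unfolding omegaM_eq_at_quotient_count[OF \<open>0 < y\<close>] nu_m_eq_quotient_count[OF \<open>0 < y\<close>]
    by (simp add: ln_power_div ln_ratio algebra_simps)
qed

end

theorem corollary4p5:
  fixes M :: "nat \<Rightarrow> real"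
  assumes "weight_sequence M"
  defines "m \<equiv> quotients M"
  defines "condI \<equiv>
      0 < Liminf at_top (\<lambda>t. ereal (nu_m m t / omegaM M t)) \<and>
      Liminf at_top (\<lambda>t. ereal (nu_m m t / omegaM M t))
        \<le> Limsup at_top (\<lambda>t. ereal (nu_m m t / omegaM M t)) \<and>
      Limsup at_top (\<lambda>t. ereal (nu_m m t / omegaM M t)) < \<infinity>"
  defines "condII \<equiv> beta_idx (nu_m m) > 0 \<and> alpha_idx (nu_m m) < \<infinity>"
  defines "condIII \<equiv> beta_idx (omegaM M) > 0 \<and> alpha_idx (omegaM M) < \<infinity>"
  shows "(condI \<longleftrightarrow> condII) \<and> (condII \<longleftrightarrow> condIII) \<and>
         (condI \<longrightarrow> beta_idx (omegaM M) = beta_idx (nu_m m) \<and>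
                   alpha_idx (omegaM M) = alpha_idx (nu_m m))"
proof -
  interpret log_integral_bounds "nu_m m" "omegaM M"
    unfolding m_def using assms(1) by (rule weight_sequence_log_integral_bounds)
  have "condI \<longleftrightarrow> comparable_at_top (nu_m m) (omegaM M)"
    unfolding condI_def comparable_at_top_iff_Liminf_Limsup_ratio[OF eventually_g_pos]
    by (simp add: Liminf_le_Limsup)
  moreover have "condII \<longleftrightarrow> comparable_at_top (nu_m m) (omegaM M)"
    unfolding condII_def by (simp add: comparable_at_top_iff_f_indices)
  moreover have "condIII \<longleftrightarrow> comparable_at_top (nu_m m) (omegaM M)"
    unfolding condIII_def by (simp add: comparable_at_top_iff_g_indices)
  ultimately show ?thesis
    using indices_eq_if_comparable_at_top[OF _ eventually_g_pos] by auto
qed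

end
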